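(* Let $n,m \in \mathbb{N}$, $a \in \Delta_n^+$, $b \in \Delta_m^+$, and let $g \colon \mathbb{R}^{n\times m} \to \mathbb{R}$ be the quadratic function \[ g(\pi) = \tfrac12 \langle \pi, H\pi\rangle + \langle C, \pi\rangle \quad \forall \pi \in \mathbb{R}^{n\times m}, \] where $H \in \mathbb{R}^{n\times n}$ is symmetric and $C \in \mathbb{R}^{n\times m}$. Assume $\lambda > \|H\|_\infty$. Let $T_\lambda \colon \mathbb{R}^{n\times m} \to \Pi_{a,b}^+$ be defined by $T_\lambda(A) = \operatorname{argmin}_{\pi \in \Pi_{a,b}} \big(\langle \nabla g(A), \pi\rangle + \lambda h(\pi)\big)$. Then $T_\lambda$ is a contraction with respect to the distance induced by $\|\cdot\|_1$ and has a unique fixed point $\pi^\star \in \Pi_{a,b}^+$. Moreover, for any $\pi^{(0)} \in \Pi_{a,b}$, the sequence defined by $\pi^{(k+1)} = T_\lambda(\pi^{(k)})$ for $k \ge 0$ satisfies, for every $T \in \mathbb{N}$, \[ \|\pi^{(T)} - \pi^\star\|_1 \le \frac{(\|H\|_\infty/\lambda)^T}{1 - \|H\|_\infty/\lambda}\, \|\pi^{(1)} - \pi^{(0)}\|_1 . \]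
   Context: $\Delta_n^+ := \{a \in \mathbb{R}^n : a_i > 0\ \forall i,\ \sum_i a_i = 1\}$. $\Pi_{a,b} := \{\pi \in \mathbb{R}_+^{n\times m} : \pi 1_m = a,\ \pi^\top 1_n = b\}$ and $\Pi_{a,b}^+$ is its subset with all entries strictly positive. $h(\pi) := \sum_{i,j}\pi_{ij}\log\frac{\pi_{ij}}{e}$ (with $0\log0=0$); for each $A$ the minimizer defining $T_\lambda(A)$ exists, is unique, and lies in $\Pi_{a,b}^+$. $\langle A,B\rangle = \mathrm{tr}(A^\top B)$; $\|A\|_1 := \sum_{i,j}|A_{ij}|$ and $\|A\|_\infty := \max_{i,j}|A_{ij}|$ (so $\|H\|_\infty$ is the largest absolute entry of $H$). *)

theory Defs
  imports "HOL-Analysis.Analysis"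
begin

text \<open>Matrices in R^{n x m} are modelled as real^'m^'n (rows indexed by 'n).
  The library inner product on real^'m^'n is the Frobenius inner product tr(A^T B).\<close>

definition pos_simplex :: "(real^'n) set" where
  "pos_simplex = {a. (\<forall>i. a $ i > 0) \<and> (\<Sum>i\<in>UNIV. a $ i) = 1}"

definition transport_polytope :: "real^'n \<Rightarrow> real^'m \<Rightarrow> (real^'m^'n) set" where
  "transport_polytope a b = {\<pi>. (\<forall>i j. \<pi> $ i $ j \<ge> 0)
      \<and> (\<forall>i. (\<Sum>j\<in>UNIV. \<pi> $ i $ j) = a $ i)
      \<and> (\<forall>j. (\<Sum>i\<in>UNIV. \<pi> $ i $ j) = b $ j)}"

definition transport_polytope_pos :: "real^'n \<Rightarrow> real^'m \<Rightarrow> (real^'m^'n) set" where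
  "transport_polytope_pos a b = {\<pi> \<in> transport_polytope a b. \<forall>i j. \<pi> $ i $ j > 0}"

definition entropy :: "real^'m^'n \<Rightarrow> real" where
  "entropy \<pi> = (\<Sum>i\<in>UNIV. \<Sum>j\<in>UNIV.
      (if \<pi> $ i $ j = 0 then 0 else \<pi> $ i $ j * ln (\<pi> $ i $ j / exp 1)))"

definition norm1 :: "real^'m^'n \<Rightarrow> real" where
  "norm1 A = (\<Sum>i\<in>UNIV. \<Sum>j\<in>UNIV. \<bar>A $ i $ j\<bar>)"

definition norminf :: "real^'m^'n \<Rightarrow> real" where
  "norminf A = Max {\<bar>A $ i $ j\<bar> | i j. True}"

definition grad :: "(real^'m^'n \<Rightarrow> real) \<Rightarrow> real^'m^'n \<Rightarrow> real^'m^'n" where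
  "grad f A = (THE G. (f has_derivative (\<lambda>x. inner G x)) (at A))"

definition quad_obj :: "real^'n^'n \<Rightarrow> real^'m^'n \<Rightarrow> real^'m^'n \<Rightarrow> real" where
  "quad_obj H C \<pi> = inner \<pi> (H ** \<pi>) / 2 + inner C \<pi>"

definition T_map :: "(real^'m^'n \<Rightarrow> real) \<Rightarrow> real \<Rightarrow> real^'n \<Rightarrow> real^'m
                     \<Rightarrow> real^'m^'n \<Rightarrow> real^'m^'n" where
  "T_map g lam a b A = (THE \<pi>. \<pi> \<in> transport_polytope a b \<and>
      (\<forall>\<sigma>\<in>transport_polytope a b.
          inner (grad g A) \<pi> + lam * entropy \<pi> \<le> inner (grad g A) \<sigma> + lam * entropy \<sigma>))"

end

theory Submission
  imports Defs "HOL-Real_Asymp.Real_Asymp"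
begin

text \<open>For a cost \<open>c\<close> and \<open>\<lambda> > 0\<close>, the minimiser \<open>\<pi>\<^sub>c\<close> of \<open>\<langle>c, \<pi>\<rangle> + \<lambda> h(\<pi>)\<close> over
  \<open>\<Pi>\<^sub>a\<^sub>,\<^sub>b\<close> is strictly positive, because the entropy has slope \<open>-\<infinity>\<close> at \<open>0\<close>, and therefore
  satisfies the variational inequality \<open>\<langle>c + \<lambda> log \<pi>\<^sub>c, \<sigma> - \<pi>\<^sub>c\<rangle> \<ge> 0\<close> on \<open>\<Pi>\<^sub>a\<^sub>,\<^sub>b\<close>.
  Adding these inequalities for two costs gives
  \<open>\<lambda> \<langle>log \<pi>\<^sub>1 - log \<pi>\<^sub>2, \<pi>\<^sub>1 - \<pi>\<^sub>2\<rangle> \<le> \<langle>c\<^sub>1 - c\<^sub>2, \<pi>\<^sub>2 - \<pi>\<^sub>1\<rangle> \<le> \<parallel>c\<^sub>1 - c\<^sub>2\<parallel>\<^sub>\<infinity> \<parallel>\<pi>\<^sub>1 - \<pi>\<^sub>2\<parallel>\<^sub>1\<close>,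
  and by Cauchy-Schwarz and the logarithmic-mean inequality the Jeffreys divergence on the left
  dominates \<open>\<parallel>\<pi>\<^sub>1 - \<pi>\<^sub>2\<parallel>\<^sub>1\<^sup>2\<close>. Hence \<open>\<lambda> \<parallel>\<pi>\<^sub>1 - \<pi>\<^sub>2\<parallel>\<^sub>1 \<le> \<parallel>c\<^sub>1 - c\<^sub>2\<parallel>\<^sub>\<infinity>\<close>. As
  \<open>\<nabla>g(A) = HA + C\<close> and \<open>\<parallel>H(A - B)\<parallel>\<^sub>\<infinity> \<le> \<parallel>H\<parallel>\<^sub>\<infinity> \<parallel>A - B\<parallel>\<^sub>1\<close>, \<open>T\<^sub>\<lambda>\<close> contracts \<open>\<parallel>\<cdot>\<parallel>\<^sub>1\<close>
  by the factor \<open>\<parallel>H\<parallel>\<^sub>\<infinity>/\<lambda>\<close>. Brouwer's theorem on the compact convex polytope \<open>\<Pi>\<^sub>a\<^sub>,\<^sub>b\<close>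
  supplies the fixed point, and the error bound is the a-priori estimate for contractions.\<close>

section \<open>The scalar entropy\<close>

definition entropy_term :: "real \<Rightarrow> real" where
  "entropy_term x = x * ln (x / exp 1)"

text \<open>Since \<open>ln 0 = 0\<close> in Isabelle, \<open>entropy_term 0 = 0\<close> already encodes the convention \<open>0 log 0 = 0\<close>.\<close>

lemma entropy_eq_sum_entropy_term:
  "entropy \<pi> = (\<Sum>i\<in>UNIV. \<Sum>j\<in>UNIV. entropy_term (\<pi> $ i $ j))"
  unfolding entropy_def entropy_term_def by (intro sum.cong refl) auto

lemma entropy_term_eq: "0 < x \<Longrightarrow> entropy_term x = x * ln x - x"
  unfolding entropy_term_def by (simp add: ln_div algebra_simps)

lemma entropy_term_tangent_le:
  assumes "0 \<le> x" "0 < z"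
  shows "entropy_term z + ln z * (x - z) \<le> entropy_term x"
proof (cases "x = 0")
  case True
  have "entropy_term z + ln z * (x - z) = - z" using True assms by (simp add: entropy_term_eq algebra_simps)
  moreover have "entropy_term x = 0" using True by (simp add: entropy_term_def)
  ultimately show ?thesis using assms by simp
next
  case False
  then have x: "0 < x" using assms by simp
  have "ln (z / x) \<le> z / x - 1" using ln_le_minus_one[of "z / x"] x assms by simp
  then have "x * (ln z - ln x) \<le> z - x" using x assms by (simp add: ln_div field_simps)
  then show ?thesis using x assms by (simp add: entropy_term_eq algebra_simps)
qed

lemma continuous_on_entropy_term: "continuous_on {0..} entropy_term"
  unfolding continuous_on_def
proof (intro ballI)
  fix x :: real assume "x \<in> {0..}"
  then consider "x = 0" | "0 < x" by fastforce
  then show "(entropy_term \<longlongrightarrow> entropy_term x) (at x within {0..})"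
  proof cases
    case 1
    have "((\<lambda>x::real. x * ln (x / exp 1)) \<longlongrightarrow> 0) (at_right 0)" by real_asymp
    then show ?thesis using 1 by (simp add: at_within_Ici_at_right entropy_term_def[abs_def])
  next
    case 2
    then have "isCont entropy_term x" unfolding entropy_term_def[abs_def]
      by (intro continuous_intros) auto
    then show ?thesis using continuous_at_imp_continuous_at_within by (auto simp: continuous_within)
  qed
qed

section \<open>Scalar inequalities\<close>

lemma ln_ge_two_diff_div_add_one:
  fixes t :: real
  assumes "1 \<le> t"
  shows "2 * (t - 1) / (t + 1) \<le> ln t"
proof -
  let ?u = "\<lambda>t::real. ln t - 2 * (t - 1) / (t + 1)"
  have "?u 1 \<le> ?u t"
  proof (rule DERIV_nonneg_imp_nondecreasing[OF assms])
    fix x :: real assume x: "1 \<le> x" "x \<le> t"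
    have "(?u has_real_derivative (1 / x - 4 / (x + 1)^2)) (at x)"
      using x by (auto intro!: derivative_eq_intros) (simp add: divide_simps power2_eq_square)
    moreover have "1 / x - 4 / (x + 1)^2 = (x - 1)^2 / (x * (x + 1)^2)"
      using x by (simp add: divide_simps) (simp add: algebra_simps power2_eq_square)
    ultimately show "\<exists>y. (?u has_real_derivative y) (at x) \<and> 0 \<le> y"
      using x by auto
  qed
  then show ?thesis by simp
qed

text \<open>The logarithmic mean \<open>(x - y) / (ln x - ln y)\<close> is at most the arithmetic mean.\<close>

lemma sq_diff_le_ln_diff_mult_mean:
  fixes x y :: real
  assumes "0 < x" "0 < y"
  shows "(x - y)^2 \<le> (ln x - ln y) * (x - y) * ((x + y) / 2)"
proof -
  have *: "(x - y)^2 \<le> (ln x - ln y) * (x - y) * ((x + y) / 2)"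
    if "0 < y" "y \<le> x" for x y :: real
  proof -
    have "2 * (x / y - 1) / (x / y + 1) \<le> ln (x / y)"
      using that by (intro ln_ge_two_diff_div_add_one) simp
    moreover have "2 * (x / y - 1) / (x / y + 1) = 2 * (x - y) / (x + y)"
      using that by (simp add: divide_simps)
    ultimately have "2 * (x - y) / (x + y) \<le> ln x - ln y"
      using that by (simp add: ln_div)
    then have "2 * (x - y) \<le> (ln x - ln y) * (x + y)"
      using that by (simp add: pos_divide_le_eq)
    then have "(x - y) * (2 * (x - y)) \<le> (x - y) * ((ln x - ln y) * (x + y))"
      using that by (intro mult_left_mono) auto
    moreover have "(x - y)^2 = (x - y) * (2 * (x - y)) / 2" by (simp add: power2_eq_square)
    moreover have "(ln x - ln y) * (x - y) * ((x + y) / 2) = (x - y) * ((ln x - ln y) * (x + y)) / 2"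
      by simp
    ultimately show ?thesis by linarith
  qed
  show ?thesis
  proof (cases "y \<le> x")
    case True
    then show ?thesis using * assms by blast
  next
    case False
    then have "(y - x)^2 \<le> (ln y - ln x) * (y - x) * ((y + x) / 2)" using * assms by simp
    then show ?thesis by (simp add: power2_commute algebra_simps)
  qed
qed

lemma sum_abs_diff_sq_le_jeffreys:
  fixes x y :: "'a \<Rightarrow> real"
  assumes "finite S" and pos: "\<And>k. k \<in> S \<Longrightarrow> 0 < x k \<and> 0 < y k"
    and "(\<Sum>k\<in>S. x k) = 1" "(\<Sum>k\<in>S. y k) = 1"
  shows "(\<Sum>k\<in>S. \<bar>x k - y k\<bar>)^2 \<le> (\<Sum>k\<in>S. (ln (x k) - ln (y k)) * (x k - y k))"
proof -
  define w where "w k = (ln (x k) - ln (y k)) * (x k - y k)" for k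
  define m where "m k = (x k + y k) / 2" for k
  have m: "0 < m k" if "k \<in> S" for k using pos[OF that] unfolding m_def by simp
  have sq: "(x k - y k)^2 \<le> w k * m k" if "k \<in> S" for k
    using sq_diff_le_ln_diff_mult_mean pos[OF that] unfolding w_def m_def by blast
  have w: "0 \<le> w k" if "k \<in> S" for k
    using sq[OF that] m[OF that] by (meson order_trans zero_le_mult_iff zero_le_power2 not_le)
  have "(\<Sum>k\<in>S. \<bar>x k - y k\<bar>) \<le> (\<Sum>k\<in>S. \<bar>sqrt (w k)\<bar> * \<bar>sqrt (m k)\<bar>)"
  proof (rule sum_mono)
    fix k assume k: "k \<in> S"
    have "sqrt ((x k - y k)^2) \<le> sqrt (w k * m k)" using sq[OF k] by (rule real_sqrt_le_mono)
    then show "\<bar>x k - y k\<bar> \<le> \<bar>sqrt (w k)\<bar> * \<bar>sqrt (m k)\<bar>"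
      using w[OF k] m[OF k] by (simp add: real_sqrt_mult)
  qed
  also have "\<dots> \<le> L2_set (\<lambda>k. sqrt (w k)) S * L2_set (\<lambda>k. sqrt (m k)) S"
    by (rule L2_set_mult_ineq)
  also have "\<dots> = sqrt (\<Sum>k\<in>S. w k) * sqrt (\<Sum>k\<in>S. m k)"
    unfolding L2_set_def using w m by (simp add: less_imp_le cong: sum.cong)
  also have "(\<Sum>k\<in>S. m k) = 1"
    unfolding m_def using assms by (simp add: sum_divide_distrib[symmetric] sum.distrib)
  finally have "(\<Sum>k\<in>S. \<bar>x k - y k\<bar>) \<le> sqrt (\<Sum>k\<in>S. w k)" by simp
  then have "(\<Sum>k\<in>S. \<bar>x k - y k\<bar>)^2 \<le> (sqrt (\<Sum>k\<in>S. w k))^2"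
    by (intro power_mono) (auto intro: sum_nonneg)
  also have "\<dots> = (\<Sum>k\<in>S. w k)" using w by (simp add: sum_nonneg)
  finally show ?thesis unfolding w_def .
qed

lemma ex_ln_mult_add_neg:
  fixes B S :: real
  assumes "0 < S"
  shows "\<exists>t. 0 < t \<and> t < 1 \<and> B + S * ln t < 0"
proof (intro exI conjI)
  let ?t = "exp (- (\<bar>B\<bar> + 1) / S)"
  show "0 < ?t" by simp
  show "?t < 1" using assms by (simp add: field_simps)
  show "B + S * ln ?t < 0" using assms by simp
qed

lemma abs_ln_convex_comb_le:
  fixes x y t :: real
  assumes "0 < x" "0 < y" "0 \<le> t" "t \<le> 1"
  shows "\<bar>ln ((1 - t) * x + t * y)\<bar> \<le> \<bar>ln x\<bar> + \<bar>ln y\<bar>"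
proof -
  let ?z = "(1 - t) * x + t * y"
  have "(1 - t) * min x y + t * min x y \<le> ?z" "?z \<le> (1 - t) * max x y + t * max x y"
    using assms by (intro add_mono mult_left_mono; simp)+
  then have "min x y \<le> ?z" "?z \<le> max x y" by (simp_all add: algebra_simps)
  then have "ln (min x y) \<le> ln ?z" "ln ?z \<le> ln (max x y)" using assms by auto
  then show ?thesis by (simp add: min_def max_def split: if_splits)
qed

lemma convex_comb_pos:
  fixes x y t :: real
  assumes "0 \<le> x" "0 \<le> y" "0 < x \<or> 0 < y" "0 < t" "t < 1"
  shows "0 < x + t * (y - x)"
proof -
  have "0 < (1 - t) * x + t * y"
    using assms by (auto intro: add_nonneg_pos add_pos_nonneg)
  then show ?thesis by (simp add: algebra_simps)
qed

section \<open>Matrix norms and the gradient of the quadratic objective\<close>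

lemma inner_matrix_eq_sum:
  "inner (X::real^'m^'n) Y = (\<Sum>i\<in>UNIV. \<Sum>j\<in>UNIV. X $ i $ j * Y $ i $ j)"
  by (simp add: inner_vec_def)

lemma norm1_nonneg: "0 \<le> norm1 A"
  unfolding norm1_def by (intro sum_nonneg) auto

lemma norm1_minus_commute: "norm1 (A - B) = norm1 (B - A)"
  unfolding norm1_def by (simp add: abs_minus_commute)

lemma norm1_triangle_ineq: "norm1 (A - C) \<le> norm1 (A - B) + norm1 (B - C)"
  unfolding norm1_def sum.distrib[symmetric]
  by (intro sum_mono) (simp add: abs_triangle_ineq[of "A$i$j - B$i$j" "B$i$j - C$i$j" for i j, simplified])

lemma norm1_eq_0_iff: "norm1 A = 0 \<longleftrightarrow> A = 0"
  unfolding norm1_def by (simp add: sum_nonneg_eq_0_iff sum_nonneg vec_eq_iff)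

lemma norm_le_norm1: "norm (A::real^'m^'n) \<le> norm1 A"
proof -
  have "norm A \<le> (\<Sum>i\<in>UNIV. norm (A $ i))" unfolding norm_vec_def by (rule L2_set_le_sum) auto
  also have "\<dots> \<le> norm1 A" unfolding norm1_def by (intro sum_mono norm_le_l1_cart)
  finally show ?thesis .
qed

lemma norm1_le_norm: "norm1 (A::real^'m^'n) \<le> real (CARD('n) * CARD('m)) * norm A"
proof -
  have "norm1 A \<le> (\<Sum>i\<in>(UNIV::'n set). \<Sum>j\<in>(UNIV::'m set). norm A)"
    unfolding norm1_def
    by (intro sum_mono order_trans[OF component_le_norm_cart Finite_Cartesian_Product.norm_nth_le])
  then show ?thesis by (simp add: mult.assoc)
qed

lemma norminf_eq_Max_image: "norminf A = Max ((\<lambda>(i, j). \<bar>A $ i $ j\<bar>) ` UNIV)"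
  unfolding norminf_def by (rule arg_cong[where f = Max]) auto

lemma abs_le_norminf: "\<bar>H $ i $ j\<bar> \<le> norminf H"
  unfolding norminf_eq_Max_image by (rule Max_ge) auto

lemma norminf_nonneg: "0 \<le> norminf H"
  using abs_le_norminf[of H] abs_ge_zero order_trans by blast

lemma norminf_le:
  assumes "\<And>i j. \<bar>A $ i $ j\<bar> \<le> M"
  shows "norminf A \<le> M"
  unfolding norminf_eq_Max_image using assms by (intro Max.boundedI) auto

lemma norminf_matrix_mult_le: "norminf (H ** D) \<le> norminf H * norm1 (D::real^'m^'n)"
proof (rule norminf_le)
  fix i j
  have "\<bar>(H ** D) $ i $ j\<bar> \<le> (\<Sum>k\<in>UNIV. \<bar>H $ i $ k\<bar> * \<bar>D $ k $ j\<bar>)"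
    unfolding matrix_matrix_mult_def by (simp add: order_trans[OF sum_abs] abs_mult)
  also have "\<dots> \<le> (\<Sum>k\<in>UNIV. norminf H * \<bar>D $ k $ j\<bar>)"
    by (intro sum_mono mult_right_mono abs_le_norminf) auto
  also have "\<dots> \<le> (\<Sum>k\<in>UNIV. norminf H * (\<Sum>l\<in>UNIV. \<bar>D $ k $ l\<bar>))"
    by (intro sum_mono mult_left_mono norminf_nonneg member_le_sum) auto
  also have "\<dots> = norminf H * norm1 D" unfolding norm1_def by (simp add: sum_distrib_left)
  finally show "\<bar>(H ** D) $ i $ j\<bar> \<le> norminf H * norm1 D" .
qed

lemma inner_le_norminf_norm1: "inner c D \<le> norminf c * norm1 (D::real^'m^'n)"
proof -
  have "inner c D \<le> (\<Sum>i\<in>UNIV. \<Sum>j\<in>UNIV. norminf c * \<bar>D $ i $ j\<bar>)"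
    unfolding inner_matrix_eq_sum
  proof (intro sum_mono)
    fix i j
    have "c $ i $ j * D $ i $ j \<le> \<bar>c $ i $ j\<bar> * \<bar>D $ i $ j\<bar>" by (simp add: abs_mult[symmetric])
    also have "\<dots> \<le> norminf c * \<bar>D $ i $ j\<bar>" by (intro mult_right_mono abs_le_norminf) auto
    finally show "c $ i $ j * D $ i $ j \<le> norminf c * \<bar>D $ i $ j\<bar>" .
  qed
  then show ?thesis unfolding norm1_def by (simp add: sum_distrib_left)
qed

lemma inner_matrix_mult_right:
  "inner A (H ** X) = inner (transpose H ** A) (X::real^'m^'n)"
proof -
  have "inner A (H ** X) = (\<Sum>i\<in>UNIV. \<Sum>j\<in>UNIV. \<Sum>k\<in>UNIV. A$i$j * H$i$k * X$k$j)"
    by (simp add: inner_matrix_eq_sum matrix_matrix_mult_def sum_distrib_left mult.assoc)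
  also have "\<dots> = (\<Sum>j\<in>UNIV. \<Sum>k\<in>UNIV. \<Sum>i\<in>UNIV. A$i$j * H$i$k * X$k$j)"
    by (subst sum.swap) (intro sum.cong refl sum.swap)
  also have "\<dots> = (\<Sum>k\<in>UNIV. \<Sum>j\<in>UNIV. \<Sum>i\<in>UNIV. A$i$j * H$i$k * X$k$j)"
    by (rule sum.swap)
  also have "\<dots> = inner (transpose H ** A) X"
    by (simp add: inner_matrix_eq_sum matrix_matrix_mult_def transpose_def
        sum_distrib_left mult_ac)
  finally show ?thesis .
qed

lemma bounded_linear_matrix_mult_left:
  "bounded_linear (\<lambda>X::real^'m^'n. (H::real^'n^'p) ** X)"
proof -
  have "linear (\<lambda>X::real^'m^'n. H ** X)"
    by (rule linearI) (simp_all add: matrix_add_ldistrib vec_eq_iff matrix_matrix_mult_def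
        sum_distrib_left sum.distrib algebra_simps)
  then show ?thesis by (simp add: linear_conv_bounded_linear)
qed

lemma grad_eqI:
  assumes "(f has_derivative (\<lambda>x. inner G x)) (at A)"
  shows "grad f A = G"
  unfolding grad_def
proof (rule the_equality)
  fix G' assume "(f has_derivative (\<lambda>x. inner G' x)) (at A)"
  then have "(\<lambda>x. inner G' x) = (\<lambda>x. inner G x)" using assms has_derivative_unique by blast
  then have "inner (G' - G) (G' - G) = 0" by (metis inner_diff_left diff_self)
  then show "G' = G" by simp
qed (rule assms)

lemma grad_quad_obj:
  assumes "transpose H = H"
  shows "grad (quad_obj H C) A = H ** A + C"
proof (rule grad_eqI)
  note lin = bounded_linear_imp_has_derivative[OF bounded_linear_matrix_mult_left]
    bounded_linear_imp_has_derivative[OF bounded_linear_inner_right]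
  have "(quad_obj H C has_derivative (\<lambda>X. (inner A (H ** X) + inner X (H ** A)) / 2 + inner C X)) (at A)"
    unfolding quad_obj_def[abs_def] by (rule derivative_eq_intros lin refl)+ (auto simp: fun_eq_iff intro: lin)
  moreover have "inner A (H ** X) = inner X (H ** A)" for X
    using inner_matrix_mult_right[of A H X] assms by (simp add: inner_commute)
  ultimately show "(quad_obj H C has_derivative (\<lambda>X. inner (H ** A + C) X)) (at A)"
    by (simp add: inner_add_left inner_add_right inner_commute)
qed

section \<open>Entropic minimisation over the transport polytope\<close>

lemma transport_polytope_nonneg: "\<pi> \<in> transport_polytope a b \<Longrightarrow> 0 \<le> \<pi> $ i $ j"
  by (simp add: transport_polytope_def)

lemma transport_polytope_total_mass:
  "\<pi> \<in> transport_polytope a b \<Longrightarrow> (\<Sum>i\<in>UNIV. \<Sum>j\<in>UNIV. \<pi> $ i $ j) = (\<Sum>i\<in>UNIV. a $ i)"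
  by (simp add: transport_polytope_def)

lemma convex_transport_polytope: "convex (transport_polytope a b)"
proof (rule convexI)
  fix x y and u v :: real assume xy: "x \<in> transport_polytope a b" "y \<in> transport_polytope a b"
    and uv: "0 \<le> u" "0 \<le> v" "u + v = 1"
  have "(\<Sum>j\<in>UNIV. (u *\<^sub>R x + v *\<^sub>R y) $ i $ j) = u * a $ i + v * a $ i" for i
    using xy by (simp add: transport_polytope_def sum.distrib sum_distrib_left[symmetric])
  moreover have "(\<Sum>i\<in>UNIV. (u *\<^sub>R x + v *\<^sub>R y) $ i $ j) = u * b $ j + v * b $ j" for j
    using xy by (simp add: transport_polytope_def sum.distrib sum_distrib_left[symmetric])
  moreover have "u * r + v * r = r" for r :: real by (metis uv(3) distrib_right mult_1)
  ultimately show "u *\<^sub>R x + v *\<^sub>R y \<in> transport_polytope a b"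
    using xy uv by (simp add: transport_polytope_def)
qed

lemma compact_transport_polytope: "compact (transport_polytope a b)"
proof -
  have "closed (transport_polytope a b)" unfolding transport_polytope_def
    by (intro closed_Collect_conj closed_Collect_all closed_Collect_le closed_Collect_eq
        continuous_intros)
  moreover have "norm \<pi> \<le> (\<Sum>i\<in>UNIV. a $ i)" if "\<pi> \<in> transport_polytope a b" for \<pi>
    using norm_le_norm1[of \<pi>] transport_polytope_total_mass[OF that]
      transport_polytope_nonneg[OF that] by (simp add: norm1_def)
  then have "bounded (transport_polytope a b)" unfolding bounded_iff by blast
  ultimately show ?thesis by (simp add: compact_eq_bounded_closed)
qed

lemma continuous_on_entropic_objective:
  fixes c :: "real^'m^'n"
  shows "continuous_on (transport_polytope a b) (\<lambda>\<pi>. inner c \<pi> + lam * entropy \<pi>)"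
proof -
  have "continuous_on (transport_polytope a b) (\<lambda>\<pi>::real^'m^'n. \<pi> $ i $ j)" for i j
    by (intro continuous_intros)
  then have "continuous_on (transport_polytope a b) (\<lambda>\<pi>. entropy_term (\<pi> $ i $ j))" for i j
    by (rule continuous_on_compose2[OF continuous_on_entropy_term])
      (auto simp: transport_polytope_nonneg)
  then show ?thesis unfolding entropy_eq_sum_entropy_term by (intro continuous_intros)
qed

definition product_coupling :: "real^'n \<Rightarrow> real^'m \<Rightarrow> real^'m^'n" where
  "product_coupling a b = (\<chi> i j. a $ i * b $ j)"

lemma product_coupling_pos:
  "a \<in> pos_simplex \<Longrightarrow> b \<in> pos_simplex \<Longrightarrow> 0 < product_coupling a b $ i $ j"
  by (simp add: product_coupling_def pos_simplex_def)

lemma product_coupling_mem: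
  assumes "a \<in> pos_simplex" "b \<in> pos_simplex"
  shows "product_coupling a b \<in> transport_polytope a b"
  using assms product_coupling_pos[OF assms]
  by (simp add: transport_polytope_def pos_simplex_def product_coupling_def less_imp_le
      sum_distrib_left[symmetric] sum_distrib_right[symmetric])

definition entropic_argmin :: "real^'n \<Rightarrow> real^'m \<Rightarrow> real^'m^'n \<Rightarrow> real \<Rightarrow> real^'m^'n \<Rightarrow> bool" where
  "entropic_argmin a b c lam \<pi> \<longleftrightarrow> \<pi> \<in> transport_polytope a b \<and>
     (\<forall>\<sigma>\<in>transport_polytope a b. inner c \<pi> + lam * entropy \<pi> \<le> inner c \<sigma> + lam * entropy \<sigma>)"

lemma entropic_argmin_exists:
  assumes "a \<in> pos_simplex" "b \<in> pos_simplex"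
  shows "\<exists>\<pi>. entropic_argmin a b c lam \<pi>"
  using continuous_attains_inf[OF compact_transport_polytope _ continuous_on_entropic_objective]
    product_coupling_mem[OF assms]
  unfolding entropic_argmin_def by blast

definition ln_entries :: "real^'m^'n \<Rightarrow> real^'m^'n" where
  "ln_entries \<pi> = (\<chi> i j. ln (\<pi> $ i $ j))"

lemma ln_entries_nth [simp]: "ln_entries \<pi> $ i $ j = ln (\<pi> $ i $ j)"
  by (simp add: ln_entries_def)

lemma entropy_ge_tangent:
  assumes "\<And>i j. 0 \<le> x $ i $ j" "\<And>i j. 0 < z $ i $ j"
  shows "entropy z + inner (ln_entries z) (x - z) \<le> entropy x"
proof -
  have "entropy z + inner (ln_entries z) (x - z)
      = (\<Sum>i\<in>UNIV. \<Sum>j\<in>UNIV. entropy_term (z $ i $ j) + ln (z $ i $ j) * (x $ i $ j - z $ i $ j))"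
    by (simp add: entropy_eq_sum_entropy_term inner_matrix_eq_sum sum.distrib)
  also have "\<dots> \<le> entropy x"
    unfolding entropy_eq_sum_entropy_term using assms by (intro sum_mono entropy_term_tangent_le)
  finally show ?thesis .
qed

lemma entropic_argmin_segment_ineq:
  assumes argmin: "entropic_argmin a b c lam \<pi>" and "0 \<le> lam"
    and \<sigma>: "\<sigma> \<in> transport_polytope a b" and t: "0 < t" "t \<le> 1"
    and pos: "\<And>i j. 0 < (\<pi> + t *\<^sub>R (\<sigma> - \<pi>)) $ i $ j"
  shows "0 \<le> inner (c + lam *\<^sub>R ln_entries (\<pi> + t *\<^sub>R (\<sigma> - \<pi>))) (\<sigma> - \<pi>)"
proof -
  define z where "z = \<pi> + t *\<^sub>R (\<sigma> - \<pi>)"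
  have \<pi>: "\<pi> \<in> transport_polytope a b" using argmin by (simp add: entropic_argmin_def)
  have "(1 - t) *\<^sub>R \<pi> + t *\<^sub>R \<sigma> \<in> transport_polytope a b"
    using convexD_alt[OF convex_transport_polytope \<pi> \<sigma>] t by simp
  then have "z \<in> transport_polytope a b" by (simp add: z_def algebra_simps)
  then have "inner c \<pi> + lam * entropy \<pi> \<le> inner c z + lam * entropy z"
    using argmin by (simp add: entropic_argmin_def)
  moreover have "inner c z = inner c \<pi> + t * inner c (\<sigma> - \<pi>)"
    by (simp add: z_def inner_add_right)
  moreover have "entropy z \<le> entropy \<pi> + t * inner (ln_entries z) (\<sigma> - \<pi>)"
    using entropy_ge_tangent[of \<pi> z] transport_polytope_nonneg[OF \<pi>] pos
    by (simp add: z_def inner_diff_right)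
  then have "lam * entropy z \<le> lam * (entropy \<pi> + t * inner (ln_entries z) (\<sigma> - \<pi>))"
    using \<open>0 \<le> lam\<close> by (rule mult_left_mono)
  ultimately have "0 \<le> t * inner c (\<sigma> - \<pi>) + lam * (t * inner (ln_entries z) (\<sigma> - \<pi>))"
    by (simp add: algebra_simps)
  then have "0 \<le> t * inner (c + lam *\<^sub>R ln_entries z) (\<sigma> - \<pi>)"
    by (simp add: inner_add_left algebra_simps)
  then show ?thesis using t by (simp add: z_def zero_le_mult_iff)
qed

lemma entropic_argmin_variational_ineq:
  assumes argmin: "entropic_argmin a b c lam \<pi>" and "0 \<le> lam"
    and \<sigma>: "\<sigma> \<in> transport_polytope a b" and pos: "\<And>i j. 0 < \<pi> $ i $ j"
  shows "0 \<le> inner (c + lam *\<^sub>R ln_entries \<pi>) (\<sigma> - \<pi>)"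
proof (rule tendsto_lowerbound)
  show "((\<lambda>t. inner (c + lam *\<^sub>R ln_entries (\<pi> + t *\<^sub>R (\<sigma> - \<pi>))) (\<sigma> - \<pi>))
      \<longlongrightarrow> inner (c + lam *\<^sub>R ln_entries \<pi>) (\<sigma> - \<pi>)) (at_right 0)"
    unfolding inner_matrix_eq_sum using pos
    by (auto intro!: tendsto_eq_intros simp: less_imp_neq[symmetric])
  have "0 < (\<pi> + t *\<^sub>R (\<sigma> - \<pi>)) $ i $ j" if "0 < t" "t < 1" for t i j
    using convex_comb_pos[of "\<pi> $ i $ j" "\<sigma> $ i $ j" t] pos[of i j] that
      transport_polytope_nonneg[OF \<sigma>] by simp
  then show "\<forall>\<^sub>F t in at_right 0. 0 \<le> inner (c + lam *\<^sub>R ln_entries (\<pi> + t *\<^sub>R (\<sigma> - \<pi>))) (\<sigma> - \<pi>)"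
    using entropic_argmin_segment_ineq[OF argmin \<open>0 \<le> lam\<close> \<sigma>]
    by (intro eventually_at_rightI[of 0 1]) auto
qed simp

text \<open>A summand of the directional derivative of the entropic objective at \<open>p\<close> towards \<open>q\<close>,
  bounded uniformly in \<open>t\<close> up to a \<open>ln t\<close> term that appears only when \<open>p = 0\<close>.\<close>

lemma entropic_summand_le:
  fixes p q c lam t :: real
  assumes "0 \<le> p" "0 < q" "0 \<le> lam" "0 < t" "t \<le> 1"
  shows "(c + lam * ln (p + t * (q - p))) * (q - p)
    \<le> (if p = 0 then (c + lam * ln q) * q else (\<bar>c\<bar> + lam * (\<bar>ln p\<bar> + \<bar>ln q\<bar>)) * \<bar>q - p\<bar>)
       + (if p = 0 then lam * q else 0) * ln t"
proof (cases "p = 0")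
  case True
  then show ?thesis using assms by (simp add: ln_mult algebra_simps)
next
  case False
  let ?z = "p + t * (q - p)"
  have "\<bar>ln ?z\<bar> \<le> \<bar>ln p\<bar> + \<bar>ln q\<bar>"
    using abs_ln_convex_comb_le[of p q t] False assms by (simp add: algebra_simps)
  then have "\<bar>c + lam * ln ?z\<bar> \<le> \<bar>c\<bar> + lam * (\<bar>ln p\<bar> + \<bar>ln q\<bar>)"
    using assms abs_triangle_ineq[of c "lam * ln ?z"] mult_left_mono[of _ _ lam]
    by (fastforce simp: abs_mult)
  then have "(c + lam * ln ?z) * (q - p) \<le> (\<bar>c\<bar> + lam * (\<bar>ln p\<bar> + \<bar>ln q\<bar>)) * \<bar>q - p\<bar>"
    using abs_ge_self[of "(c + lam * ln ?z) * (q - p)"]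
    by (simp add: abs_mult order_trans[OF _ mult_right_mono])
  then show ?thesis using False by simp
qed

text \<open>The entropy has slope \<open>-\<infinity>\<close> at \<open>0\<close>, so moving a minimiser with a zero entry
  slightly towards the positive product coupling would decrease the objective.\<close>

lemma entropic_argmin_pos:
  assumes a: "a \<in> pos_simplex" and b: "b \<in> pos_simplex"
    and argmin: "entropic_argmin a b c lam \<pi>" and lam: "0 < lam"
  shows "0 < \<pi> $ i0 $ j0"
proof (rule ccontr)
  assume "\<not> 0 < \<pi> $ i0 $ j0"
  define P where "P = product_coupling a b"
  have \<pi>: "\<pi> \<in> transport_polytope a b" using argmin by (simp add: entropic_argmin_def)
  have \<pi>0: "0 \<le> \<pi> $ i $ j" for i j using transport_polytope_nonneg[OF \<pi>] .
  have P: "P \<in> transport_polytope a b" "0 < P $ i $ j" for i j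
    unfolding P_def using product_coupling_mem[OF a b] product_coupling_pos[OF a b] by auto
  define B where "B i j = (if \<pi> $ i $ j = 0 then (c $ i $ j + lam * ln (P $ i $ j)) * P $ i $ j
    else (\<bar>c $ i $ j\<bar> + lam * (\<bar>ln (\<pi> $ i $ j)\<bar> + \<bar>ln (P $ i $ j)\<bar>)) * \<bar>P $ i $ j - \<pi> $ i $ j\<bar>)" for i j
  define s where "s i j = (if \<pi> $ i $ j = 0 then lam * P $ i $ j else 0)" for i j
  have s0: "0 \<le> s i j" for i j using lam P(2)[of i j] by (simp add: s_def)
  have "0 < s i0 j0" using \<open>\<not> 0 < \<pi> $ i0 $ j0\<close> \<pi>0[of i0 j0] lam P(2)[of i0 j0] by (simp add: s_def)
  also have "s i0 j0 \<le> (\<Sum>j\<in>UNIV. s i0 j)" by (rule member_le_sum) (auto intro: s0)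
  also have "\<dots> \<le> (\<Sum>i\<in>UNIV. \<Sum>j\<in>UNIV. s i j)"
    by (rule member_le_sum[where f = "\<lambda>i. \<Sum>j\<in>UNIV. s i j"]) (auto intro: s0 sum_nonneg)
  finally obtain t where t: "0 < t" "t < 1"
    and neg: "(\<Sum>i\<in>UNIV. \<Sum>j\<in>UNIV. B i j) + (\<Sum>i\<in>UNIV. \<Sum>j\<in>UNIV. s i j) * ln t < 0"
    using ex_ln_mult_add_neg by blast
  have "0 \<le> inner (c + lam *\<^sub>R ln_entries (\<pi> + t *\<^sub>R (P - \<pi>))) (P - \<pi>)"
    using t convex_comb_pos[OF \<pi>0 less_imp_le[OF P(2)]] P(2)
    by (intro entropic_argmin_segment_ineq[OF argmin _ P(1)]) (auto intro: less_imp_le lam)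
  also have "\<dots> \<le> (\<Sum>i\<in>UNIV. \<Sum>j\<in>UNIV. B i j + s i j * ln t)"
    unfolding inner_matrix_eq_sum B_def s_def
    using \<pi>0 P(2) lam t by (intro sum_mono) (simp add: entropic_summand_le)
  also have "\<dots> = (\<Sum>i\<in>UNIV. \<Sum>j\<in>UNIV. B i j) + (\<Sum>i\<in>UNIV. \<Sum>j\<in>UNIV. s i j) * ln t"
    by (simp add: sum.distrib sum_distrib_right)
  finally show False using neg by linarith
qed

lemma sum_sum_UNIV_eq_sum_pairs:
  "(\<Sum>i\<in>UNIV. \<Sum>j\<in>UNIV. f i j) = (\<Sum>(i, j)\<in>UNIV. f i j)"
  by (simp add: sum.cartesian_product flip: UNIV_Times_UNIV)

lemma norm1_diff_sq_le_jeffreys: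
  assumes a: "a \<in> pos_simplex"
    and \<pi>: "\<pi>1 \<in> transport_polytope a b" "\<pi>2 \<in> transport_polytope a b"
    and pos: "\<And>i j. 0 < \<pi>1 $ i $ j" "\<And>i j. 0 < \<pi>2 $ i $ j"
  shows "norm1 (\<pi>1 - \<pi>2)^2 \<le> inner (ln_entries \<pi>1 - ln_entries \<pi>2) (\<pi>1 - \<pi>2)"
proof -
  have mass: "(\<Sum>(i, j)\<in>UNIV. \<pi> $ i $ j) = 1" if "\<pi> \<in> transport_polytope a b" for \<pi>
    using transport_polytope_total_mass[OF that] a
    by (simp add: pos_simplex_def flip: sum_sum_UNIV_eq_sum_pairs)
  have "(\<Sum>(i, j)\<in>UNIV. \<bar>\<pi>1 $ i $ j - \<pi>2 $ i $ j\<bar>)^2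
      \<le> (\<Sum>(i, j)\<in>UNIV. (ln (\<pi>1 $ i $ j) - ln (\<pi>2 $ i $ j)) * (\<pi>1 $ i $ j - \<pi>2 $ i $ j))"
    using sum_abs_diff_sq_le_jeffreys[of UNIV "\<lambda>(i, j). \<pi>1 $ i $ j" "\<lambda>(i, j). \<pi>2 $ i $ j"]
      pos mass[OF \<pi>(1)] mass[OF \<pi>(2)] by (simp add: case_prod_beta)
  then show ?thesis
    by (simp add: norm1_def inner_matrix_eq_sum sum_sum_UNIV_eq_sum_pairs)
qed

text \<open>Add the variational inequalities of both minimisers and bound the Jeffreys divergence
  from below.\<close>

lemma entropic_argmin_norm1_diff_le:
  assumes a: "a \<in> pos_simplex" and b: "b \<in> pos_simplex" and lam: "0 < lam"
    and argmin1: "entropic_argmin a b c1 lam \<pi>1" and argmin2: "entropic_argmin a b c2 lam \<pi>2"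
  shows "lam * norm1 (\<pi>1 - \<pi>2) \<le> norminf (c1 - c2)"
proof -
  have \<pi>: "\<pi>1 \<in> transport_polytope a b" "\<pi>2 \<in> transport_polytope a b"
    using argmin1 argmin2 by (simp_all add: entropic_argmin_def)
  note pos = entropic_argmin_pos[OF a b argmin1 lam] entropic_argmin_pos[OF a b argmin2 lam]
  have "0 \<le> inner (c1 + lam *\<^sub>R ln_entries \<pi>1) (\<pi>2 - \<pi>1)"
    using lam by (intro entropic_argmin_variational_ineq[OF argmin1 _ \<pi>(2)] pos) simp
  moreover have "0 \<le> inner (c2 + lam *\<^sub>R ln_entries \<pi>2) (\<pi>1 - \<pi>2)"
    using lam by (intro entropic_argmin_variational_ineq[OF argmin2 _ \<pi>(1)] pos) simp
  ultimately have "lam * inner (ln_entries \<pi>1 - ln_entries \<pi>2) (\<pi>1 - \<pi>2) \<le> inner (c1 - c2) (\<pi>2 - \<pi>1)"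
    by (simp add: inner_diff_left inner_diff_right inner_add_left algebra_simps)
  moreover have "lam * norm1 (\<pi>1 - \<pi>2)^2 \<le> lam * inner (ln_entries \<pi>1 - ln_entries \<pi>2) (\<pi>1 - \<pi>2)"
    using lam by (intro mult_left_mono norm1_diff_sq_le_jeffreys[OF a \<pi> pos]) simp
  moreover have "inner (c1 - c2) (\<pi>2 - \<pi>1) \<le> norminf (c1 - c2) * norm1 (\<pi>1 - \<pi>2)"
    using inner_le_norminf_norm1[of "c1 - c2" "\<pi>2 - \<pi>1"] by (simp add: norm1_minus_commute)
  ultimately have "(lam * norm1 (\<pi>1 - \<pi>2)) * norm1 (\<pi>1 - \<pi>2) \<le> norminf (c1 - c2) * norm1 (\<pi>1 - \<pi>2)"
    by (simp add: power2_eq_square mult.assoc)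
  then show ?thesis
    using norm1_nonneg[of "\<pi>1 - \<pi>2"] norminf_nonneg[of "c1 - c2"]
    by (cases "norm1 (\<pi>1 - \<pi>2) = 0") simp_all
qed

lemma entropic_argmin_unique:
  assumes "a \<in> pos_simplex" "b \<in> pos_simplex" "0 < lam"
    and "entropic_argmin a b c lam \<pi>1" "entropic_argmin a b c lam \<pi>2"
  shows "\<pi>1 = \<pi>2"
proof -
  have "lam * norm1 (\<pi>1 - \<pi>2) \<le> 0"
    using entropic_argmin_norm1_diff_le[OF assms] norminf_le[of "c - c" 0] by simp
  then have "norm1 (\<pi>1 - \<pi>2) = 0"
    using \<open>0 < lam\<close> norm1_nonneg[of "\<pi>1 - \<pi>2"] by (simp add: mult_le_0_iff)
  then show ?thesis by (simp add: norm1_eq_0_iff)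
qed

lemma entropic_argmin_T_map:
  assumes "a \<in> pos_simplex" "b \<in> pos_simplex" "0 < lam"
  shows "entropic_argmin a b (grad g A) lam (T_map g lam a b A)"
proof -
  have "\<exists>!\<pi>. entropic_argmin a b (grad g A) lam \<pi>"
    using entropic_argmin_exists[OF assms(1,2)] entropic_argmin_unique[OF assms] by blast
  moreover have "T_map g lam a b A = (THE \<pi>. entropic_argmin a b (grad g A) lam \<pi>)"
    unfolding T_map_def entropic_argmin_def ..
  ultimately show ?thesis using theI' by metis
qed

lemma T_map_quad_obj_contraction:
  assumes "a \<in> pos_simplex" "b \<in> pos_simplex" "transpose H = H" "0 < lam"
  shows "norm1 (T_map (quad_obj H C) lam a b A - T_map (quad_obj H C) lam a b B)
    \<le> norminf H / lam * norm1 (A - B)"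
proof -
  have "(H ** A + C) - (H ** B + C) = H ** (A - B)"
    by (simp add: vec_eq_iff matrix_matrix_mult_def sum_subtractf[symmetric] algebra_simps)
  then have "lam * norm1 (T_map (quad_obj H C) lam a b A - T_map (quad_obj H C) lam a b B)
      \<le> norminf (H ** (A - B))"
    using entropic_argmin_norm1_diff_le[OF assms(1,2,4)
        entropic_argmin_T_map[OF assms(1,2,4), where g = "quad_obj H C" and A = A]
        entropic_argmin_T_map[OF assms(1,2,4), where g = "quad_obj H C" and A = B]]
    by (simp add: grad_quad_obj[OF assms(3)])
  also have "\<dots> \<le> norminf H * norm1 (A - B)" by (rule norminf_matrix_mult_le)
  finally show ?thesis using assms(4) by (simp add: field_simps)
qed

section \<open>Contractions in the 1-norm\<close>

lemma continuous_on_norm1_contraction: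
  fixes T :: "real^'m^'n \<Rightarrow> real^'m^'n"
  assumes contr: "\<And>A B. norm1 (T A - T B) \<le> q * norm1 (A - B)" and "0 \<le> q"
  shows "continuous_on S T"
proof (rule lipschitz_on_continuous_on)
  show "(q * real (CARD('n) * CARD('m)))-lipschitz_on S T"
  proof (rule lipschitz_onI)
    fix A B
    have "dist (T A) (T B) \<le> q * norm1 (A - B)"
      using norm_le_norm1[of "T A - T B"] contr[of A B] by (simp add: dist_norm)
    also have "\<dots> \<le> q * (real (CARD('n) * CARD('m)) * dist A B)"
      using \<open>0 \<le> q\<close> norm1_le_norm[of "A - B"] by (simp add: dist_norm mult_left_mono)
    finally show "dist (T A) (T B) \<le> q * real (CARD('n) * CARD('m)) * dist A B"
      by (simp add: mult.assoc)
  qed (use \<open>0 \<le> q\<close> in simp)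
qed

lemma norm1_contraction_fixpoint_unique:
  assumes contr: "\<And>A B. norm1 (T A - T B) \<le> q * norm1 (A - B)" and "q < 1"
    and "T p = p" "T x = x"
  shows "x = p"
proof -
  have "norm1 (x - p) \<le> q * norm1 (x - p)" using contr[of x p] assms by simp
  then have "(1 - q) * norm1 (x - p) \<le> 0" by (simp add: algebra_simps)
  then have "norm1 (x - p) = 0"
    using \<open>q < 1\<close> norm1_nonneg[of "x - p"] by (simp add: mult_le_0_iff)
  then show ?thesis by (simp add: norm1_eq_0_iff)
qed

lemma norm1_contraction_iterate_le:
  assumes contr: "\<And>A B. norm1 (T A - T B) \<le> q * norm1 (A - B)" and q: "0 \<le> q" "q < 1"
    and fixp: "T p = p"
  shows "norm1 ((T ^^ k) x - p) \<le> q ^ k / (1 - q) * norm1 (T x - x)"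
proof -
  have iter: "norm1 ((T ^^ k) x - p) \<le> q ^ k * norm1 (x - p)" for k
  proof (induction k)
    case (Suc k)
    have "norm1 ((T ^^ Suc k) x - p) \<le> q * norm1 ((T ^^ k) x - p)"
      using contr[of "(T ^^ k) x" p] fixp by simp
    also have "\<dots> \<le> q * (q ^ k * norm1 (x - p))" using Suc q by (intro mult_left_mono)
    finally show ?case by (simp add: mult.assoc)
  qed simp
  have "norm1 (x - p) \<le> norm1 (x - T x) + norm1 (T x - p)" by (rule norm1_triangle_ineq)
  also have "norm1 (T x - p) \<le> q * norm1 (x - p)" using contr[of x p] fixp by simp
  finally have "(1 - q) * norm1 (x - p) \<le> norm1 (T x - x)"
    by (simp add: norm1_minus_commute algebra_simps)
  then have "norm1 (x - p) \<le> norm1 (T x - x) / (1 - q)" using q by (simp add: field_simps)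
  then have "q ^ k * norm1 (x - p) \<le> q ^ k * (norm1 (T x - x) / (1 - q))"
    using q by (intro mult_left_mono) simp_all
  then show ?thesis using iter[of k] by simp
qed

theorem theorem1:
  fixes a :: "real^'n" and b :: "real^'m"
    and H :: "real^'n^'n" and C :: "real^'m^'n" and lam :: real
  assumes "a \<in> pos_simplex" and "b \<in> pos_simplex"
    and "transpose H = H"
    and "lam > norminf H"
  shows "(\<exists>q. 0 \<le> q \<and> q < 1 \<and>
            (\<forall>A B. norm1 (T_map (quad_obj H C) lam a b A - T_map (quad_obj H C) lam a b B)
                    \<le> q * norm1 (A - B)))
       \<and> (\<exists>\<pi>s. \<pi>s \<in> transport_polytope_pos a b
            \<and> T_map (quad_obj H C) lam a b \<pi>s = \<pi>s
            \<and> (\<forall>A. T_map (quad_obj H C) lam a b A = A \<longrightarrow> A = \<pi>s)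
            \<and> (\<forall>\<pi>0 \<in> transport_polytope a b. \<forall>k::nat.
                 norm1 ((T_map (quad_obj H C) lam a b ^^ k) \<pi>0 - \<pi>s)
                 \<le> (norminf H / lam) ^ k / (1 - norminf H / lam)
                    * norm1 (T_map (quad_obj H C) lam a b \<pi>0 - \<pi>0)))"
proof -
  note a = assms(1) and b = assms(2)
  define T where "T = T_map (quad_obj H C) lam a b"
  define q where "q = norminf H / lam"
  have lam: "0 < lam" using assms(4) norminf_nonneg[of H] by linarith
  have q: "0 \<le> q" "q < 1" unfolding q_def using lam assms(4) norminf_nonneg[of H] by auto
  have contr: "norm1 (T A - T B) \<le> q * norm1 (A - B)" for A B
    unfolding T_def q_def by (rule T_map_quad_obj_contraction[OF a b assms(3) lam])
  have argmin: "entropic_argmin a b (H ** A + C) lam (T A)" for A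
    using entropic_argmin_T_map[OF a b lam, where g = "quad_obj H C" and A = A]
    by (simp add: T_def grad_quad_obj[OF assms(3)])
  obtain \<pi>s where \<pi>s: "\<pi>s \<in> transport_polytope a b" "T \<pi>s = \<pi>s"
  proof (rule brouwer[OF compact_transport_polytope convex_transport_polytope])
    show "transport_polytope a b \<noteq> {}" using product_coupling_mem[OF a b] by blast
    show "continuous_on (transport_polytope a b) T"
      using continuous_on_norm1_contraction[OF contr q(1)] .
    show "T \<in> transport_polytope a b \<rightarrow> transport_polytope a b"
      using argmin by (simp add: entropic_argmin_def)
  qed
  have pos: "\<pi>s \<in> transport_polytope_pos a b"
    using \<pi>s entropic_argmin_pos[OF a b argmin lam, of \<pi>s] by (simp add: transport_polytope_pos_def)
  show ?thesis
    unfolding T_def[symmetric] q_def[symmetric]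
  proof (intro conjI exI[of _ q] exI[of _ \<pi>s] allI ballI impI)
    show "norm1 (T A - T B) \<le> q * norm1 (A - B)" for A B by (rule contr)
    show "A = \<pi>s" if "T A = A" for A
      by (rule norm1_contraction_fixpoint_unique[OF contr q(2) \<pi>s(2) that])
    show "norm1 ((T ^^ k) \<pi>0 - \<pi>s) \<le> q ^ k / (1 - q) * norm1 (T \<pi>0 - \<pi>0)" for k \<pi>0
      by (rule norm1_contraction_iterate_le[OF contr q \<pi>s(2)])
  qed (use q \<pi>s(2) pos in auto)
qed

end
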